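(* Let $\langle E,\rightarrow\rangle$ be a computation, $Q$ a subset of the processes, and $b$ a regular predicate that depends only on variables of processes in $Q$. Then the graph $H_b(E)$ has the same set of consistent cuts as the slice of $\langle E,\rightarrow\rangle$ with respect to $b$.
   Context: A computation is a directed graph $\langle E, \rightarrow\rangle$ whose vertices (events) are partitioned among processes $p_1,\dots,p_n$; events on each process are totally ordered, each process $p_i$ has an initial event $\bot_i$ and final event $\top_i$, the path relation contains Lamport's happened-before relation, all initial events lie in one strongly connected component and all final events in one. $\top$ is the set of final events, $\mathrm{succ}(e)$ the successor of $e$ on its process. A vertex subset $C$ of a directed graph is a consistent cut if for every edge $(u,v)$, $v\in C$ implies $u\in C$. A predicate (a boolean function of process variables evaluated on non-trivial consistent cuts) is regular if whenever consistent cuts $C_1,C_2$ satisfy it, so do $C_1\cap C_2$ and $C_1\cup C_2$. The slice of a computation with respect to $b$ is a directed graph on its events whose consistent cuts include every consistent cut satisfying $b$ and which has the fewest consistent cuts among all such graphs (paths in it are determined by its set of consistent cuts). Let $E_Q$ be the set of events on processes in $Q$; the projection of $\langle E,\rightarrow\rangle$ on $Q$ is the directed graph on $E_Q$ with an edge $(e,f)$ whenever there is a path from $e$ to $f$ in $\langle E,\rightarrow\rangle$; $b$ is evaluated on its cuts. For an event $e$, $F(e)[i]$ is the earliest event on $p_i$ reachable from $e$ in $\langle E,\rightarrow\rangle$; for $e\in E_Q$ and $p_i\in Q$, $F^Q_b(e)[i]$ is the earliest event on $p_i$ reachable from $e$ in the slice of the projection with respect to $b$. Define $K_b(e)[i]=F^Q_b(e)[i]$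 if $e\in E_Q$ and $p_i\in Q$, and $K_b(e)[i]=F(e)[i]$ otherwise. $H_b(E)$ is the directed graph with vertex set $E$ and edges from each $e\notin\top$ to $\mathrm{succ}(e)$ and from each event $e$ to $K_b(e)[i]$ for every process $p_i$. *)

theory Defs
  imports Main
begin

text \<open>The events of process i are
  (i,0), (i,1), ..., (i, len i - 1), totally ordered by the second component;
  (i,0) is the initial event and (i, len i - 1) the final event of process i.\<close>

type_synonym event = "nat \<times> nat"

definition events :: "nat \<Rightarrow> (nat \<Rightarrow> nat) \<Rightarrow> event set" where
  "events n len = {(i, k). i < n \<and> k < len i}"

definition final_events :: "nat \<Rightarrow> (nat \<Rightarrow> nat) \<Rightarrow> event set" where
  "final_events n len = {(i, len i - 1) | i. i < n}"

definition succ_ev :: "event \<Rightarrow> event" where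
  "succ_ev e = (fst e, Suc (snd e))"

definition computation :: "nat \<Rightarrow> (nat \<Rightarrow> nat) \<Rightarrow> (event \<times> event) set \<Rightarrow> bool" where
  "computation n len R \<longleftrightarrow>
     n \<ge> 1 \<and> (\<forall>i<n. len i \<ge> 1) \<and> R \<subseteq> events n len \<times> events n len \<and>
     (\<forall>i<n. \<forall>k. Suc k < len i \<longrightarrow> ((i, k), (i, Suc k)) \<in> R\<^sup>+) \<and>
     (\<forall>i<n. \<forall>j<n. ((i, 0), (j, 0)) \<in> R\<^sup>*) \<and>
     (\<forall>i<n. \<forall>j<n. ((i, len i - 1), (j, len j - 1)) \<in> R\<^sup>*)"

definition cuts :: "'a set \<Rightarrow> ('a \<times> 'a) set \<Rightarrow> 'a set set" where
  "cuts V G = {C. C \<subseteq> V \<and> (\<forall>(u, v)\<in>G. v \<in> C \<longrightarrow> u \<in> C)}"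

definition nontrivial_cuts :: "'a set \<Rightarrow> ('a \<times> 'a) set \<Rightarrow> 'a set set" where
  "nontrivial_cuts V G = {C \<in> cuts V G. C \<noteq> {} \<and> C \<noteq> V}"

definition sat_cuts :: "'a set \<Rightarrow> ('a \<times> 'a) set \<Rightarrow> ('a set \<Rightarrow> bool) \<Rightarrow> 'a set set" where
  "sat_cuts V G b = {C \<in> nontrivial_cuts V G. b C}"

definition is_slice :: "'a set \<Rightarrow> ('a \<times> 'a) set \<Rightarrow> ('a set \<Rightarrow> bool) \<Rightarrow> ('a \<times> 'a) set \<Rightarrow> bool" where
  "is_slice V G b T \<longleftrightarrow>
     T \<subseteq> V \<times> V \<and> sat_cuts V G b \<subseteq> cuts V T \<and>
     (\<forall>T'. T' \<subseteq> V \<times> V \<and> sat_cuts V G b \<subseteq> cuts V T' \<longrightarrow> card (cuts V T) \<le> card (cuts V T'))"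

definition regular :: "event set \<Rightarrow> (event \<times> event) set \<Rightarrow> (event set \<Rightarrow> bool) \<Rightarrow> bool" where
  "regular V G b \<longleftrightarrow>
     (\<forall>C1\<in>sat_cuts V G b. \<forall>C2\<in>sat_cuts V G b. b (C1 \<inter> C2) \<and> b (C1 \<union> C2))"

definition proj_events :: "nat \<Rightarrow> (nat \<Rightarrow> nat) \<Rightarrow> nat set \<Rightarrow> event set" where
  "proj_events n len Q = {e \<in> events n len. fst e \<in> Q}"

definition proj_rel :: "nat \<Rightarrow> (nat \<Rightarrow> nat) \<Rightarrow> (event \<times> event) set \<Rightarrow> nat set \<Rightarrow> (event \<times> event) set" where
  "proj_rel n len R Q = {(e, f). e \<in> proj_events n len Q \<and> f \<in> proj_events n len Q \<and> (e, f) \<in> R\<^sup>+}"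

definition depends_only_on :: "nat \<Rightarrow> (nat \<Rightarrow> nat) \<Rightarrow> nat set \<Rightarrow> (event set \<Rightarrow> bool) \<Rightarrow> bool" where
  "depends_only_on n len Q b \<longleftrightarrow>
     (\<forall>C C'. C \<subseteq> events n len \<longrightarrow> C' \<subseteq> events n len \<longrightarrow>
        C \<inter> proj_events n len Q = C' \<inter> proj_events n len Q \<longrightarrow> b C = b C')"

definition earliest :: "(nat \<Rightarrow> nat) \<Rightarrow> (event \<times> event) set \<Rightarrow> event \<Rightarrow> nat \<Rightarrow> event" where
  "earliest len G e i = (i, LEAST k. k < len i \<and> (e, (i, k)) \<in> G\<^sup>*)"

text \<open>K_b, where T is the slice of the projection on Q with respect to b.\<close>
definition Kb :: "(nat \<Rightarrow> nat) \<Rightarrow> (event \<times> event) set \<Rightarrow> nat set \<Rightarrow> (event \<times> event) set \<Rightarrow> event \<Rightarrow> nat \<Rightarrow> event" where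
  "Kb len R Q T e i = (if fst e \<in> Q \<and> i \<in> Q then earliest len T e i else earliest len R e i)"

definition Hb :: "nat \<Rightarrow> (nat \<Rightarrow> nat) \<Rightarrow> (event \<times> event) set \<Rightarrow> nat set \<Rightarrow> (event \<times> event) set \<Rightarrow> (event \<times> event) set" where
  "Hb n len R Q T =
     {(e, succ_ev e) | e. e \<in> events n len \<and> e \<notin> final_events n len} \<union>
     {(e, Kb len R Q T e i) | e i. e \<in> events n len \<and> i < n}"

end

theory Submission
  imports Defs
begin

text \<open>
  The cuts satisfying a regular predicate b, together with the two trivial cuts, are closed
  under intersection and union; on a finite vertex set such a family is exactly the set of
  cuts of a graph (Birkhoff), so by minimality a slice has precisely these cuts.

  Since b depends only on the processes in Q, a cut C of E satisfies b iff C \<inter> E_Q does,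
  and every b-cut D of the projection is C \<inter> E_Q for the b-cut C of E generated by D.
  Hence b is regular on the projection as well, its slice T has the b-cuts of the projection
  as cuts, and every edge of the projection is a path in T.

  The edges of H_b force a cut to be closed under process order, under the edges of the
  computation (the earliest event reachable on p_j from u lies below every successor of u
  on p_j, reachability being taken in T when both processes are in Q), and under the edges
  of T. Conversely every K_b-edge is a path in the computation or in T. So the cuts of H_b
  are the cuts C of E with C \<inter> E_Q a cut of T, i.e. with C \<inter> E_Q trivial or satisfying b;
  as a nonempty Q contains an initial and a final event, these are the trivial cuts and
  the b-cuts of E.
\<close>

section \<open>Consistent cuts of finite graphs\<close>

lemma empty_in_cuts: "{} \<in> cuts V G"
  by (simp add: cuts_def)

lemma carrier_in_cuts: "G \<subseteq> V \<times> V \<Longrightarrow> V \<in> cuts V G"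
  unfolding cuts_def by blast

lemma Int_in_cuts: "A \<in> cuts V G \<Longrightarrow> B \<in> cuts V G \<Longrightarrow> A \<inter> B \<in> cuts V G"
  unfolding cuts_def by blast

lemma Un_in_cuts: "A \<in> cuts V G \<Longrightarrow> B \<in> cuts V G \<Longrightarrow> A \<union> B \<in> cuts V G"
  unfolding cuts_def by blast

lemma finite_cuts: "finite V \<Longrightarrow> finite (cuts V G)"
  by (rule finite_subset[of _ "Pow V"]) (auto simp: cuts_def)

lemma cut_rtrancl_closed:
  assumes "C \<in> cuts V G" "(u, w) \<in> G\<^sup>*" "w \<in> C"
  shows "u \<in> C"
  using assms(2,3)
  by (induction rule: converse_rtrancl_induct) (use assms(1) in \<open>auto simp: cuts_def\<close>)

lemma ancestors_in_cuts:
  assumes "G \<subseteq> V \<times> V"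
  shows "{u \<in> V. \<exists>w\<in>D. (u, w) \<in> G\<^sup>*} \<in> cuts V G"
proof -
  have "u \<in> V \<and> (\<exists>w\<in>D. (u, w) \<in> G\<^sup>*)" if "(u, v) \<in> G" "w \<in> D" "(v, w) \<in> G\<^sup>*" for u v w
    using that assms converse_rtrancl_into_rtrancl[OF that(1,3)] by blast
  then show ?thesis unfolding cuts_def by blast
qed

lemma rtrancl_iff_cuts:
  assumes "G \<subseteq> V \<times> V" "w \<in> V"
  shows "(u, w) \<in> G\<^sup>* \<longleftrightarrow> (\<forall>C\<in>cuts V G. w \<in> C \<longrightarrow> u \<in> C)"
proof
  assume u: "\<forall>C\<in>cuts V G. w \<in> C \<longrightarrow> u \<in> C"
  define C where "C = {u \<in> V. \<exists>w'\<in>{w}. (u, w') \<in> G\<^sup>*}"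
  have "C \<in> cuts V G"
    unfolding C_def using assms(1) by (rule ancestors_in_cuts)
  moreover have "w \<in> C" using assms(2) by (simp add: C_def)
  ultimately have "u \<in> C" using u by blast
  then show "(u, w) \<in> G\<^sup>*" by (simp add: C_def)
next
  assume "(u, w) \<in> G\<^sup>*"
  then show "\<forall>C\<in>cuts V G. w \<in> C \<longrightarrow> u \<in> C"
    by (blast intro: cut_rtrancl_closed)
qed

lemma subset_rtrancl_if_cuts_subset:
  assumes "H \<subseteq> V \<times> V" "G \<subseteq> V \<times> V" "cuts V H \<subseteq> cuts V G"
  shows "G \<subseteq> H\<^sup>*"
proof
  fix e assume "e \<in> G"
  then obtain u w where e: "e = (u, w)" "(u, w) \<in> G" by (cases e) auto
  then have "w \<in> V" using assms(2) by blast
  moreover have "u \<in> C" if "C \<in> cuts V H" "w \<in> C" for C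
  proof -
    have "C \<in> cuts V G" using that(1) assms(3) by blast
    then show ?thesis using e(2) that(2) unfolding cuts_def by blast
  qed
  ultimately show "e \<in> H\<^sup>*" using rtrancl_iff_cuts[OF assms(1)] e(1) by blast
qed

lemma Inter_in_if_Int_closed:
  assumes "finite F" "F \<noteq> {}" "F \<subseteq> L" "\<And>A B. A \<in> L \<Longrightarrow> B \<in> L \<Longrightarrow> A \<inter> B \<in> L"
  shows "\<Inter>F \<in> L"
  using assms by (induction F rule: finite_ne_induct) auto

lemma Union_in_if_Un_closed:
  assumes "finite F" "F \<noteq> {}" "F \<subseteq> L" "\<And>A B. A \<in> L \<Longrightarrow> B \<in> L \<Longrightarrow> A \<union> B \<in> L"
  shows "\<Union>F \<in> L"
  using assms by (induction F rule: finite_ne_induct) auto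

definition lattice_graph :: "'a set \<Rightarrow> 'a set set \<Rightarrow> ('a \<times> 'a) set" where
  "lattice_graph V L = {(u, w). u \<in> V \<and> w \<in> V \<and> (\<forall>C\<in>L. w \<in> C \<longrightarrow> u \<in> C)}"

lemma cuts_lattice_graph:
  assumes "finite V" "L \<subseteq> Pow V" "{} \<in> L" "V \<in> L"
    and Int_closed: "\<And>A B. A \<in> L \<Longrightarrow> B \<in> L \<Longrightarrow> A \<inter> B \<in> L"
    and Un_closed: "\<And>A B. A \<in> L \<Longrightarrow> B \<in> L \<Longrightarrow> A \<union> B \<in> L"
  shows "cuts V (lattice_graph V L) = L"
proof
  show "L \<subseteq> cuts V (lattice_graph V L)"
    using assms(2) unfolding cuts_def lattice_graph_def by blast
next
  show "cuts V (lattice_graph V L) \<subseteq> L"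
  proof
    fix C assume C: "C \<in> cuts V (lattice_graph V L)"
    then have "C \<subseteq> V" by (simp add: cuts_def)
    define least where "least w = \<Inter>{X \<in> L. w \<in> X}" for w
    have least_in: "least w \<in> L" if "w \<in> V" for w
      unfolding least_def
    proof (rule Inter_in_if_Int_closed[OF _ _ _ Int_closed])
      have "{X \<in> L. w \<in> X} \<subseteq> Pow V" using assms(2) by blast
      then show "finite {X \<in> L. w \<in> X}"
        using assms(1) by (simp add: finite_subset)
      show "{X \<in> L. w \<in> X} \<noteq> {}" using that assms(4) by blast
    qed blast+
    have least_sub: "least w \<subseteq> C" if "w \<in> C" for w
    proof
      fix u assume "u \<in> least w"
      then have "u \<in> V" "\<forall>X\<in>L. w \<in> X \<longrightarrow> u \<in> X"
        using assms(4) that \<open>C \<subseteq> V\<close> unfolding least_def by blast+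
      then have "(u, w) \<in> lattice_graph V L"
        using that \<open>C \<subseteq> V\<close> unfolding lattice_graph_def by blast
      then show "u \<in> C" using C that unfolding cuts_def by blast
    qed
    have "C = \<Union>(least ` C)"
      using least_sub unfolding least_def by blast
    moreover have "\<Union>(least ` C) \<in> L" if "C \<noteq> {}"
    proof (rule Union_in_if_Un_closed[OF _ _ _ Un_closed])
      show "finite (least ` C)" using finite_subset[OF \<open>C \<subseteq> V\<close> assms(1)] by blast
      show "least ` C \<subseteq> L" using least_in \<open>C \<subseteq> V\<close> by blast
    qed (use that in blast)+
    ultimately show "C \<in> L" using assms(3) by (cases "C = {}") simp_all
  qed
qed

section \<open>Slices of regular predicates\<close>

text \<open>b is only evaluated on nontrivial cuts, so a slice also has the cuts {} and V.\<close>

definition slice_lattice :: "'a set \<Rightarrow> ('a \<times> 'a) set \<Rightarrow> ('a set \<Rightarrow> bool) \<Rightarrow> 'a set set" where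
  "slice_lattice V G b = sat_cuts V G b \<union> {{}, V}"

lemma slice_lattice_subset_cuts:
  "G \<subseteq> V \<times> V \<Longrightarrow> slice_lattice V G b \<subseteq> cuts V G"
  unfolding slice_lattice_def sat_cuts_def nontrivial_cuts_def
  using empty_in_cuts carrier_in_cuts by blast

lemma slice_lattice_subset_Pow: "slice_lattice V G b \<subseteq> Pow V"
  unfolding slice_lattice_def sat_cuts_def nontrivial_cuts_def cuts_def by blast

lemma mem_slice_lattice:
  assumes "G \<subseteq> V \<times> V"
  shows "X \<in> slice_lattice V G b \<longleftrightarrow> X \<in> cuts V G \<and> (X = {} \<or> X = V \<or> b X)"
  using assms empty_in_cuts carrier_in_cuts
  unfolding slice_lattice_def sat_cuts_def nontrivial_cuts_def by blast

lemma slice_lattice_Int_Un_closed: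
  assumes "regular V G b" "A \<in> slice_lattice V G b" "B \<in> slice_lattice V G b"
  shows "A \<inter> B \<in> slice_lattice V G b \<and> A \<union> B \<in> slice_lattice V G b"
proof (cases "A \<in> sat_cuts V G b \<and> B \<in> sat_cuts V G b")
  case True
  then have cuts: "A \<inter> B \<in> cuts V G" "A \<union> B \<in> cuts V G"
    by (auto simp: sat_cuts_def nontrivial_cuts_def intro: Int_in_cuts Un_in_cuts)
  have "b (A \<inter> B)" "b (A \<union> B)"
    using assms(1) True unfolding regular_def by blast+
  with cuts show ?thesis
    unfolding slice_lattice_def sat_cuts_def nontrivial_cuts_def by blast
next
  case False
  then have "A = {} \<or> A = V \<or> B = {} \<or> B = V"
    using assms(2,3) unfolding slice_lattice_def by blast
  moreover have "A \<subseteq> V" "B \<subseteq> V"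
    using assms(2,3) slice_lattice_subset_Pow by blast+
  ultimately have "A \<inter> B \<in> {A, B, {}} \<and> A \<union> B \<in> {A, B, V}"
    by blast
  moreover have "{A, B, {}, V} \<subseteq> slice_lattice V G b"
    using assms(2,3) by (simp add: slice_lattice_def)
  ultimately show ?thesis by blast
qed

lemma cuts_slice:
  assumes "finite V" "regular V G b" "is_slice V G b T"
  shows "cuts V T = slice_lattice V G b"
proof -
  let ?L = "slice_lattice V G b"
  have T: "T \<subseteq> V \<times> V" "sat_cuts V G b \<subseteq> cuts V T"
    using assms(3) unfolding is_slice_def by blast+
  have lattice: "cuts V (lattice_graph V ?L) = ?L"
    using slice_lattice_Int_Un_closed[OF assms(2)]
    by (intro cuts_lattice_graph assms(1) slice_lattice_subset_Pow)
       (auto simp: slice_lattice_def)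
  have "lattice_graph V ?L \<subseteq> V \<times> V" "sat_cuts V G b \<subseteq> cuts V (lattice_graph V ?L)"
    unfolding lattice by (auto simp: lattice_graph_def slice_lattice_def)
  then have "card (cuts V T) \<le> card ?L"
    using assms(3) lattice unfolding is_slice_def by metis
  moreover have "?L \<subseteq> cuts V T"
    using T empty_in_cuts carrier_in_cuts unfolding slice_lattice_def by blast
  ultimately show ?thesis
    using card_seteq finite_cuts[OF assms(1)] by blast
qed

section \<open>Computations and projections\<close>

lemma mem_events [simp]: "(i, k) \<in> events n len \<longleftrightarrow> i < n \<and> k < len i"
  by (simp add: events_def)

lemma mem_proj_events [simp]: "(i, k) \<in> proj_events n len Q \<longleftrightarrow> i < n \<and> k < len i \<and> i \<in> Q"
  by (auto simp: proj_events_def)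

lemma proj_events_subset: "proj_events n len Q \<subseteq> events n len"
  by (auto simp: proj_events_def)

lemma finite_events: "finite (events n len)"
proof -
  have "events n len = (SIGMA i:{..<n}. {..<len i})" by (auto simp: events_def)
  then show ?thesis by simp
qed

lemma computation_edges: "computation n len R \<Longrightarrow> R \<subseteq> events n len \<times> events n len"
  by (simp add: computation_def)

lemma computation_len_pos: "computation n len R \<Longrightarrow> i < n \<Longrightarrow> 0 < len i"
  by (auto simp: computation_def)

lemma computation_process_order:
  assumes "computation n len R" "j < n" "k \<le> m" "m < len j"
  shows "((j, k), (j, m)) \<in> R\<^sup>*"
proof -
  have "m < len j \<longrightarrow> ((j, k), (j, m)) \<in> R\<^sup>*"
    using assms(3)
  proof (induction rule: dec_induct)
    case (step m)
    have "Suc m < len j \<longrightarrow> ((j, m), (j, Suc m)) \<in> R\<^sup>+"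
      using assms(1,2) unfolding computation_def by blast
    with step.IH show ?case by auto
  qed simp
  with assms(4) show ?thesis by blast
qed

lemma computation_initial_reaches:
  assumes "computation n len R" "i < n" "(j, k) \<in> events n len"
  shows "((i, 0), (j, k)) \<in> R\<^sup>*"
proof -
  have "((i, 0), (j, 0)) \<in> R\<^sup>*"
    using assms unfolding computation_def by simp
  also have "((j, 0), (j, k)) \<in> R\<^sup>*"
    using assms by (intro computation_process_order) auto
  finally show ?thesis .
qed

lemma computation_reaches_final:
  assumes "computation n len R" "(j, k) \<in> events n len" "i < n"
  shows "((j, k), (i, len i - 1)) \<in> R\<^sup>*"
proof -
  have "((j, k), (j, len j - 1)) \<in> R\<^sup>*"
    using assms computation_len_pos[OF assms(1)] by (intro computation_process_order) auto
  also have "((j, len j - 1), (i, len i - 1)) \<in> R\<^sup>*"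
    using assms unfolding computation_def by simp
  finally show ?thesis .
qed

lemma computation_nonempty_cut_initial:
  assumes "computation n len R" "C \<in> cuts (events n len) R" "C \<noteq> {}" "i < n"
  shows "(i, 0) \<in> C"
proof -
  obtain j k where "(j, k) \<in> C" using assms(3) by auto
  moreover have "(j, k) \<in> events n len"
    using assms(2) \<open>(j, k) \<in> C\<close> by (auto simp: cuts_def)
  ultimately show ?thesis
    using assms cut_rtrancl_closed computation_initial_reaches by metis
qed

lemma computation_cut_final:
  assumes "computation n len R" "C \<in> cuts (events n len) R" "i < n" "(i, len i - 1) \<in> C"
  shows "C = events n len"
proof
  show "C \<subseteq> events n len" using assms(2) by (simp add: cuts_def)
  show "events n len \<subseteq> C"
    using assms cut_rtrancl_closed computation_reaches_final by fastforce
qed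

lemma computation_succ_ev:
  assumes "computation n len R" "e \<in> events n len" "e \<notin> final_events n len"
  shows "(e, succ_ev e) \<in> R\<^sup>+"
proof -
  obtain j k where e: "e = (j, k)" by fastforce
  have "j < n" "k < len j" using assms(2) e by simp_all
  moreover have "k \<noteq> len j - 1"
    using assms(3) e \<open>j < n\<close> unfolding final_events_def by blast
  ultimately have "Suc k < len j" by linarith
  then show ?thesis
    using assms(1) \<open>j < n\<close> e unfolding computation_def succ_ev_def by simp
qed

lemma proj_rel_subset: "proj_rel n len R Q \<subseteq> proj_events n len Q \<times> proj_events n len Q"
  by (auto simp: proj_rel_def)

lemma cut_Int_proj_events:
  assumes "C \<in> cuts (events n len) R"
  shows "C \<inter> proj_events n len Q \<in> cuts (proj_events n len Q) (proj_rel n len R Q)"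
proof -
  have "u \<in> C" if "(u, w) \<in> proj_rel n len R Q" "w \<in> C" for u w
  proof -
    have "(u, w) \<in> R\<^sup>*" using that(1) by (auto simp: proj_rel_def)
    then show ?thesis by (rule cut_rtrancl_closed[OF assms _ that(2)])
  qed
  then show ?thesis
    using proj_rel_subset[of n len R Q] unfolding cuts_def by fast
qed

lemma depends_only_on_Int_proj_events:
  assumes "depends_only_on n len Q b" "C \<subseteq> events n len"
  shows "b (C \<inter> proj_events n len Q) = b C"
  using assms(1)[unfolded depends_only_on_def, rule_format, of "C \<inter> proj_events n len Q" C] assms(2)
  by auto

lemma sat_cut_proj_lift:
  assumes "R \<subseteq> events n len \<times> events n len" "depends_only_on n len Q b"
    and D: "D \<in> sat_cuts (proj_events n len Q) (proj_rel n len R Q) b"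
  obtains C where "C \<in> sat_cuts (events n len) R b" "C \<inter> proj_events n len Q = D"
proof
  let ?VQ = "proj_events n len Q"
  define C where "C = {u \<in> events n len. \<exists>w\<in>D. (u, w) \<in> R\<^sup>*}"
  have D_cut: "D \<in> cuts ?VQ (proj_rel n len R Q)" "D \<noteq> {}" "D \<noteq> ?VQ" "b D"
    using D unfolding sat_cuts_def nontrivial_cuts_def by blast+
  then have "D \<subseteq> ?VQ" by (simp add: cuts_def)
  show "C \<inter> ?VQ = D"
  proof
    show "D \<subseteq> C \<inter> ?VQ"
      using \<open>D \<subseteq> ?VQ\<close> proj_events_subset unfolding C_def by blast
    show "C \<inter> ?VQ \<subseteq> D"
    proof
      fix u assume u: "u \<in> C \<inter> ?VQ"
      then obtain w where w: "w \<in> D" "(u, w) \<in> R\<^sup>*" unfolding C_def by blast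
      show "u \<in> D"
      proof (cases "u = w")
        case False
        then have "(u, w) \<in> R\<^sup>+" using w(2) rtranclD by metis
        then have "(u, w) \<in> proj_rel n len R Q"
          using u w(1) \<open>D \<subseteq> ?VQ\<close> unfolding proj_rel_def by blast
        then show ?thesis using D_cut(1) w(1) unfolding cuts_def by blast
      qed (use w in simp)
    qed
  qed
  have "C \<in> cuts (events n len) R"
    unfolding C_def using assms(1) by (rule ancestors_in_cuts)
  moreover have "C \<subseteq> events n len" unfolding C_def by blast
  moreover have "b C"
    using depends_only_on_Int_proj_events[OF assms(2) \<open>C \<subseteq> events n len\<close>]
      \<open>C \<inter> ?VQ = D\<close> D_cut(4) by simp
  moreover have "C \<noteq> {}" "C \<noteq> events n len"
    using \<open>C \<inter> ?VQ = D\<close> D_cut(2,3) proj_events_subset[of n len Q] by auto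
  ultimately show "C \<in> sat_cuts (events n len) R b"
    by (simp add: sat_cuts_def nontrivial_cuts_def)
qed

lemma regular_proj:
  assumes "R \<subseteq> events n len \<times> events n len" "depends_only_on n len Q b" "regular (events n len) R b"
  shows "regular (proj_events n len Q) (proj_rel n len R Q) b"
  unfolding regular_def
proof safe
  let ?VQ = "proj_events n len Q"
  fix A B assume A: "A \<in> sat_cuts ?VQ (proj_rel n len R Q) b"
    and B: "B \<in> sat_cuts ?VQ (proj_rel n len R Q) b"
  obtain CA where CA: "CA \<in> sat_cuts (events n len) R b" "CA \<inter> ?VQ = A"
    using sat_cut_proj_lift[OF assms(1,2) A] .
  obtain CB where CB: "CB \<in> sat_cuts (events n len) R b" "CB \<inter> ?VQ = B"
    using sat_cut_proj_lift[OF assms(1,2) B] .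
  have sub: "CA \<subseteq> events n len" "CB \<subseteq> events n len"
    using CA(1) CB(1) unfolding sat_cuts_def nontrivial_cuts_def cuts_def by blast+
  have "b (CA \<inter> CB)" "b (CA \<union> CB)"
    using assms(3) CA(1) CB(1) unfolding regular_def by blast+
  moreover have "(CA \<inter> CB) \<inter> ?VQ = A \<inter> B" "(CA \<union> CB) \<inter> ?VQ = A \<union> B"
    using CA(2) CB(2) by blast+
  ultimately show "b (A \<inter> B)" "b (A \<union> B)"
    using depends_only_on_Int_proj_events[OF assms(2)] sub by (metis Un_least le_infI1)+
qed

lemma computation_cut_trivial_if_proj_trivial:
  assumes "computation n len R" "Q \<subseteq> {..<n}" "Q \<noteq> {}"
    and "C \<in> cuts (events n len) R"
    and "C \<inter> proj_events n len Q = {} \<or> C \<inter> proj_events n len Q = proj_events n len Q"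
  shows "C = {} \<or> C = events n len"
proof -
  obtain q where "q \<in> Q" using assms(3) by blast
  then have "q < n" using assms(2) by blast
  then have initial: "(q, 0) \<in> proj_events n len Q" and final: "(q, len q - 1) \<in> proj_events n len Q"
    using \<open>q \<in> Q\<close> computation_len_pos[OF assms(1)] by simp_all
  show ?thesis using assms(5)
  proof
    assume "C \<inter> proj_events n len Q = {}"
    then show ?thesis
      using computation_nonempty_cut_initial[OF assms(1,4) _ \<open>q < n\<close>] initial by blast
  next
    assume "C \<inter> proj_events n len Q = proj_events n len Q"
    then show ?thesis
      using computation_cut_final[OF assms(1,4) \<open>q < n\<close>] final by blast
  qed
qed

lemma slice_lattice_via_proj:
  assumes "computation n len R" "Q \<subseteq> {..<n}" "Q \<noteq> {}" "depends_only_on n len Q b"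
  shows "{C \<in> cuts (events n len) R.
            C \<inter> proj_events n len Q \<in> slice_lattice (proj_events n len Q) (proj_rel n len R Q) b}
         = slice_lattice (events n len) R b"
proof -
  let ?V = "events n len" and ?VQ = "proj_events n len Q"
  have "C \<inter> ?VQ \<in> slice_lattice ?VQ (proj_rel n len R Q) b \<longleftrightarrow> C \<in> slice_lattice ?V R b"
    if C: "C \<in> cuts ?V R" for C
  proof -
    have "C \<subseteq> ?V" using C by (simp add: cuts_def)
    have "C \<inter> ?VQ = {} \<or> C \<inter> ?VQ = ?VQ \<longleftrightarrow> C = {} \<or> C = ?V"
      using computation_cut_trivial_if_proj_trivial[OF assms(1-3) C] by auto
    moreover have "b (C \<inter> ?VQ) = b C"
      using assms(4) \<open>C \<subseteq> ?V\<close> by (rule depends_only_on_Int_proj_events)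
    ultimately show ?thesis
      using C cut_Int_proj_events[OF C]
        mem_slice_lattice[OF proj_rel_subset] mem_slice_lattice[OF computation_edges[OF assms(1)]]
      by metis
  qed
  then show ?thesis
    using mem_slice_lattice[OF computation_edges[OF assms(1)]] by blast
qed

section \<open>The graph H_b\<close>

lemma fst_earliest [simp]: "fst (earliest len G e i) = i"
  by (simp add: earliest_def)

lemma earliest_reachable:
  assumes "(e, (i, k)) \<in> G\<^sup>*" "k < len i"
  shows "(e, earliest len G e i) \<in> G\<^sup>*" and "snd (earliest len G e i) \<le> k"
proof -
  let ?P = "\<lambda>k. k < len i \<and> (e, (i, k)) \<in> G\<^sup>*"
  have "?P k" using assms by simp
  then show "(e, earliest len G e i) \<in> G\<^sup>*" "snd (earliest len G e i) \<le> k"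
    unfolding earliest_def using LeastI[of ?P k] Least_le[of ?P k] by simp_all
qed

lemma fst_Kb [simp]: "fst (Kb len R Q T e i) = i"
  by (simp add: Kb_def)

lemma Kb_proj: "fst e \<in> Q \<Longrightarrow> i \<in> Q \<Longrightarrow> Kb len R Q T e i = earliest len T e i"
  by (simp add: Kb_def)

lemma Kb_not_proj: "\<not> (fst e \<in> Q \<and> i \<in> Q) \<Longrightarrow> Kb len R Q T e i = earliest len R e i"
  unfolding Kb_def by (simp only: if_False)

lemma mem_Hb:
  "(u, w) \<in> Hb n len R Q T \<longleftrightarrow> u \<in> events n len \<and>
     ((u \<notin> final_events n len \<and> w = succ_ev u) \<or> (\<exists>i<n. w = Kb len R Q T u i))"
  unfolding Hb_def by blast

lemma Hb_cut_process_closed: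
  assumes "C \<in> cuts (events n len) (Hb n len R Q T)" "(j, m) \<in> C" "k \<le> m"
  shows "(j, k) \<in> C"
  using assms(3)
proof (induction k rule: inc_induct)
  case (step k)
  have "(j, Suc k) \<in> events n len"
    using step.IH assms(1) by (auto simp: cuts_def)
  then have "(j, k) \<in> events n len" "(j, k) \<notin> final_events n len"
    by (auto simp: final_events_def)
  then have "((j, k), (j, Suc k)) \<in> Hb n len R Q T"
    by (simp add: mem_Hb succ_ev_def)
  then show ?case using step.IH assms(1) unfolding cuts_def by blast
qed (use assms(2) in simp)

lemma Hb_cut_Kb_closed:
  assumes "C \<in> cuts (events n len) (Hb n len R Q T)" "u \<in> events n len" "j < n"
    and "snd (Kb len R Q T u j) \<le> m" "(j, m) \<in> C"
  shows "u \<in> C"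
proof -
  have "(j, snd (Kb len R Q T u j)) \<in> C"
    using assms(1,5,4) by (rule Hb_cut_process_closed)
  then have "Kb len R Q T u j \<in> C" by (metis fst_Kb prod.collapse)
  moreover have "(u, Kb len R Q T u j) \<in> Hb n len R Q T"
    using assms(2,3) by (auto simp: mem_Hb)
  ultimately show ?thesis using assms(1) unfolding cuts_def by blast
qed

locale sliced_computation =
  fixes n :: nat and len :: "nat \<Rightarrow> nat" and R :: "(event \<times> event) set"
    and Q :: "nat set" and T :: "(event \<times> event) set"
  assumes computation: "computation n len R"
    and Q_subset: "Q \<subseteq> {..<n}"
    and T_edges: "T \<subseteq> proj_events n len Q \<times> proj_events n len Q"
    and proj_rel_subset_rtrancl: "proj_rel n len R Q \<subseteq> T\<^sup>*"
begin

abbreviation "E \<equiv> events n len"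
abbreviation "E_Q \<equiv> proj_events n len Q"
abbreviation "H \<equiv> Hb n len R Q T"

lemma final_reachable_in_T:
  assumes "u \<in> E_Q" "i \<in> Q"
  shows "(u, (i, len i - 1)) \<in> T\<^sup>*"
proof (cases "u = (i, len i - 1)")
  case False
  have "i < n" using assms(2) Q_subset by blast
  have "u \<in> E" using assms(1) proj_events_subset by blast
  then have "(u, (i, len i - 1)) \<in> R\<^sup>*"
    using computation_reaches_final[OF computation _ \<open>i < n\<close>] by (metis prod.collapse)
  then have "(u, (i, len i - 1)) \<in> R\<^sup>+" using False rtranclD by metis
  moreover have "(i, len i - 1) \<in> E_Q"
    using \<open>i < n\<close> assms(2) computation_len_pos[OF computation] by simp
  ultimately have "(u, (i, len i - 1)) \<in> proj_rel n len R Q"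
    using assms(1) unfolding proj_rel_def by blast
  then show ?thesis using proj_rel_subset_rtrancl by blast
qed simp

lemma Kb_reachable_in_T:
  assumes "u \<in> E_Q" "i \<in> Q"
  shows "(u, Kb len R Q T u i) \<in> T\<^sup>*"
proof -
  have "i < n" using assms(2) Q_subset by blast
  then have "len i - 1 < len i" using computation_len_pos[OF computation] by simp
  moreover have "fst u \<in> Q" using assms(1) by (auto simp: proj_events_def)
  ultimately show ?thesis
    using earliest_reachable(1)[OF final_reachable_in_T[OF assms]] assms(2) by (simp add: Kb_proj)
qed

lemma Kb_reachable_in_R:
  assumes "u \<in> E" "i < n" "\<not> (fst u \<in> Q \<and> i \<in> Q)"
  shows "(u, Kb len R Q T u i) \<in> R\<^sup>*"
proof -
  have "(u, (i, len i - 1)) \<in> R\<^sup>*"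
    using computation_reaches_final[OF computation _ assms(2)] assms(1) by (metis prod.collapse)
  moreover have "len i - 1 < len i" using assms(2) computation_len_pos[OF computation] by simp
  ultimately show ?thesis
    using earliest_reachable(1) assms(3) by (simp add: Kb_not_proj)
qed

lemma Kb_le_of_trancl:
  assumes "(u, (j, m)) \<in> R\<^sup>+"
  shows "snd (Kb len R Q T u j) \<le> m"
proof -
  have "u \<in> E" "(j, m) \<in> E"
    using trancl_subset_Sigma[OF computation_edges[OF computation]] assms by blast+
  then have "m < len j" by simp
  show ?thesis
  proof (cases "fst u \<in> Q \<and> j \<in> Q")
    case True
    with \<open>u \<in> E\<close> \<open>(j, m) \<in> E\<close> have "(u, (j, m)) \<in> proj_rel n len R Q"
      using assms by (auto simp: proj_rel_def proj_events_def)
    then have "(u, (j, m)) \<in> T\<^sup>*" using proj_rel_subset_rtrancl by blast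
    then show ?thesis using earliest_reachable(2) \<open>m < len j\<close> True by (simp add: Kb_proj)
  next
    case False
    then show ?thesis
      using earliest_reachable(2) \<open>m < len j\<close> trancl_into_rtrancl[OF assms] by (simp add: Kb_not_proj)
  qed
qed

lemma Kb_le_of_T_edge:
  assumes "(u, (j, m)) \<in> T"
  shows "snd (Kb len R Q T u j) \<le> m"
proof -
  have "u \<in> E_Q" "(j, m) \<in> E_Q" using assms T_edges by blast+
  then have "fst u \<in> Q" "j \<in> Q" "m < len j" by (auto simp: proj_events_def)
  then show ?thesis using earliest_reachable(2)[OF r_into_rtrancl[OF assms]] by (simp add: Kb_proj)
qed

lemma cut_Hb_imp_cut_R:
  assumes "C \<in> cuts E H"
  shows "C \<in> cuts E R"
proof -
  have "u \<in> C" if "(u, (j, m)) \<in> R" "(j, m) \<in> C" for u j m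
  proof (rule Hb_cut_Kb_closed[OF assms _ _ _ that(2)])
    show "u \<in> E" "j < n"
      using that(1) computation_edges[OF computation] by auto
    show "snd (Kb len R Q T u j) \<le> m"
      using that(1) by (intro Kb_le_of_trancl) simp
  qed
  then show ?thesis using assms unfolding cuts_def by fast
qed

lemma cut_Hb_imp_cut_T:
  assumes "C \<in> cuts E H"
  shows "C \<inter> E_Q \<in> cuts E_Q T"
proof -
  have "u \<in> C" if "(u, (j, m)) \<in> T" "(j, m) \<in> C" for u j m
  proof (rule Hb_cut_Kb_closed[OF assms _ _ _ that(2)])
    show "u \<in> E" "j < n"
      using that(1) T_edges proj_events_subset by (auto simp: proj_events_def)
    show "snd (Kb len R Q T u j) \<le> m"
      using that(1) by (rule Kb_le_of_T_edge)
  qed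
  then show ?thesis using T_edges unfolding cuts_def by fast
qed

lemma cut_Hb_if_cuts:
  assumes R_cut: "C \<in> cuts E R" and T_cut: "C \<inter> E_Q \<in> cuts E_Q T"
  shows "C \<in> cuts E H"
proof -
  have "C \<subseteq> E" using R_cut by (simp add: cuts_def)
  have "u \<in> C" if "(u, w) \<in> H" "w \<in> C" for u w
  proof -
    from that(1) have "u \<in> E" and
      "(u \<notin> final_events n len \<and> w = succ_ev u) \<or> (\<exists>i<n. w = Kb len R Q T u i)"
      by (simp_all add: mem_Hb)
    then consider
        "u \<notin> final_events n len" "w = succ_ev u"
      | i where "i < n" "w = Kb len R Q T u i" "fst u \<in> Q" "i \<in> Q"
      | i where "i < n" "w = Kb len R Q T u i" "\<not> (fst u \<in> Q \<and> i \<in> Q)"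
      by blast
    then show "u \<in> C"
    proof cases
      case 1
      then have "(u, w) \<in> R\<^sup>*"
        using computation_succ_ev[OF computation \<open>u \<in> E\<close>] by auto
      then show ?thesis using cut_rtrancl_closed[OF R_cut _ that(2)] by blast
    next
      case (2 i)
      have "u \<in> E_Q" using \<open>u \<in> E\<close> 2(3) by (auto simp: proj_events_def)
      moreover have "w \<in> C \<inter> E_Q"
        using that(2) \<open>C \<subseteq> E\<close> 2 by (auto simp: proj_events_def)
      ultimately show ?thesis
        using cut_rtrancl_closed[OF T_cut] Kb_reachable_in_T 2 by blast
    next
      case (3 i)
      then show ?thesis
        using cut_rtrancl_closed[OF R_cut _ that(2)] Kb_reachable_in_R \<open>u \<in> E\<close> by blast
    qed
  qed
  then show ?thesis using \<open>C \<subseteq> E\<close> unfolding cuts_def by fast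
qed

lemma cuts_Hb: "cuts E H = {C \<in> cuts E R. C \<inter> E_Q \<in> cuts E_Q T}"
  using cut_Hb_imp_cut_R cut_Hb_imp_cut_T cut_Hb_if_cuts by blast

end

theorem theorem10:
  fixes n :: nat and len :: "nat \<Rightarrow> nat" and R :: "(event \<times> event) set"
    and Q :: "nat set" and b :: "event set \<Rightarrow> bool"
    and T S :: "(event \<times> event) set"
  assumes "computation n len R"
    and "Q \<subseteq> {..<n}" and "Q \<noteq> {}"
    and "regular (events n len) R b"
    and "depends_only_on n len Q b"
    and "is_slice (proj_events n len Q) (proj_rel n len R Q) b T"
    and "is_slice (events n len) R b S"
  shows "cuts (events n len) (Hb n len R Q T) = cuts (events n len) S"
proof -
  let ?VQ = "proj_events n len Q" and ?P = "proj_rel n len R Q"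
  have R_edges: "R \<subseteq> events n len \<times> events n len"
    using assms(1) by (rule computation_edges)
  have cuts_S: "cuts (events n len) S = slice_lattice (events n len) R b"
    using finite_events assms(4,7) by (rule cuts_slice)
  have "regular ?VQ ?P b"
    using R_edges assms(5,4) by (rule regular_proj)
  then have cuts_T: "cuts ?VQ T = slice_lattice ?VQ ?P b"
    using finite_subset[OF proj_events_subset finite_events] assms(6) by (intro cuts_slice)
  have T_edges: "T \<subseteq> ?VQ \<times> ?VQ"
    using assms(6) by (simp add: is_slice_def)
  have "cuts ?VQ T \<subseteq> cuts ?VQ ?P"
    using cuts_T slice_lattice_subset_cuts[OF proj_rel_subset] by simp
  then have "?P \<subseteq> T\<^sup>*"
    by (rule subset_rtrancl_if_cuts_subset[OF T_edges proj_rel_subset])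
  then interpret sliced_computation n len R Q T
    using assms(1,2) T_edges by unfold_locales
  show ?thesis
    using cuts_Hb slice_lattice_via_proj[OF assms(1-3,5)] cuts_S cuts_T by simp
qed

end
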